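(* Let $p>0$, $M\in\mathbb N_0$, $d_{\max}\in\mathbb N_0$, $c_p=\min\{2^{1-p},1\}$, and $$d(p,M,d_{\max})=1+\bigl\lfloor c_p^{-2}+(c_p^{-1}+c_p^{-2})\,d_{\max}M^p\bigr\rfloor.$$ For every $d\ge d(p,M,d_{\max})$ and every $\omega^0\in\mathbb Z^V$ whose set of broken edges $D=\{\{v,w\}:\omega^0_v\neq\omega^0_w\}$ satisfies $d_D\le d_{\max}$ and whose increments satisfy $\max_{v\sim w}|\omega^0_v-\omega^0_w|\le M$, the configuration $\omega^0$ is stable for the $p$-SOS model on $\mathcal T^d$ with stability constant $c=dc_p^2-1-(c_p+1)d_{\max}M^p>0$.
   Context: $\mathcal T^d=(V,E)$ is the Cayley tree of order $d$ (every vertex has $d+1$ neighbours). For $D\subset E$, $d_D(v)$ is the number of edges of $D$ incident to $v$ and $d_D=\max_v d_D(v)$. For configurations $\omega,\omega^0\in\mathbb Z^V$ differing at finitely many sites, $H(\omega)-H(\omega^0)=\sum_{\{v,w\}\in E}(|\omega_v-\omega_w|^p-|\omega^0_v-\omega^0_w|^p)$ (a finite sum). A configuration $\omega^0\in\mathbb Z^V$ is called stable with stability constant $c>0$ if for all $\omega\in\mathbb Z^V$ differing from $\omega^0$ at finitely many sites, $H(\omega)-H(\omega^0)\ge c\sum_{v}|\omega_v-\omega^0_v|^p$. *)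

theory Defs
  imports Complex_Main
begin

text \<open>Cayley tree of order d: vertices are reduced words over the alphabet {0..d}
  (free product of d+1 copies of Z/2); w and w@[a] are neighbours.
  Every vertex has exactly d+1 neighbours.\<close>

definition tree_V :: "nat \<Rightarrow> nat list set" where
  "tree_V d = {w. (\<forall>x\<in>set w. x \<le> d) \<and> (\<forall>i. Suc i < length w \<longrightarrow> w ! i \<noteq> w ! Suc i)}"

text \<open>Each (undirected) edge is represented exactly once, as the pair (parent, child).\<close>
definition tree_E :: "nat \<Rightarrow> (nat list \<times> nat list) set" where
  "tree_E d = {(v, v @ [a]) | v a. v @ [a] \<in> tree_V d}"

definition incident :: "nat list \<Rightarrow> (nat list \<times> nat list) \<Rightarrow> bool" where
  "incident v e \<longleftrightarrow> fst e = v \<or> snd e = v"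

definition broken_edges :: "nat \<Rightarrow> (nat list \<Rightarrow> int) \<Rightarrow> (nat list \<times> nat list) set" where
  "broken_edges d \<omega> = {e \<in> tree_E d. \<omega> (fst e) \<noteq> \<omega> (snd e)}"

definition degree_in :: "(nat list \<times> nat list) set \<Rightarrow> nat list \<Rightarrow> nat" where
  "degree_in D v = card {e \<in> D. incident v e}"

definition diff_sites :: "nat \<Rightarrow> (nat list \<Rightarrow> int) \<Rightarrow> (nat list \<Rightarrow> int) \<Rightarrow> nat list set" where
  "diff_sites d \<omega> \<omega>0 = {v \<in> tree_V d. \<omega> v \<noteq> \<omega>0 v}"

text \<open>H(\<omega>) - H(\<omega>0): the sum over all edges; only edges touching a site where the
  configurations differ contribute, so we sum over those (finitely many).\<close>
definition H_diff :: "real \<Rightarrow> nat \<Rightarrow> (nat list \<Rightarrow> int) \<Rightarrow> (nat list \<Rightarrow> int) \<Rightarrow> real" where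
  "H_diff p d \<omega> \<omega>0 =
     (\<Sum>e\<in>{e \<in> tree_E d. \<exists>v\<in>diff_sites d \<omega> \<omega>0. incident v e}.
        real_of_int \<bar>\<omega> (fst e) - \<omega> (snd e)\<bar> powr p
        - real_of_int \<bar>\<omega>0 (fst e) - \<omega>0 (snd e)\<bar> powr p)"

definition stable :: "real \<Rightarrow> nat \<Rightarrow> (nat list \<Rightarrow> int) \<Rightarrow> real \<Rightarrow> bool" where
  "stable p d \<omega>0 c \<longleftrightarrow> c > 0 \<and>
     (\<forall>\<omega>. finite (diff_sites d \<omega> \<omega>0) \<longrightarrow>
        H_diff p d \<omega> \<omega>0 \<ge> c * (\<Sum>v\<in>diff_sites d \<omega> \<omega>0. real_of_int \<bar>\<omega> v - \<omega>0 v\<bar> powr p))"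

definition c_p :: "real \<Rightarrow> real" where
  "c_p p = min (2 powr (1 - p)) 1"

definition d_bound :: "real \<Rightarrow> nat \<Rightarrow> nat \<Rightarrow> nat" where
  "d_bound p M dmax = 1 + nat \<lfloor>(c_p p) powi (-2)
       + ((c_p p) powi (-1) + (c_p p) powi (-2)) * real dmax * (real M powr p)\<rfloor>"

end

theory Submission
  imports Defs "HOL-Analysis.Convex"
begin

text \<open>Write \<open>\<delta> = \<omega> - \<omega>0\<close>, supported on a finite set \<open>S\<close>, and orient each edge from parent
  to child. On an edge \<open>u \<rightarrow> v\<close> that is not broken by \<open>\<omega>0\<close>, the quasi-triangle inequality
  \<open>c_p (a + b)^p \<le> a^p + b^p\<close> bounds the energy increment \<open>|\<delta>u - \<delta>v|^p\<close> below by
  \<open>c_p |\<delta>u|^p - |\<delta>v|^p\<close>. Summing over the edges touching \<open>S\<close>, each vertex of \<open>S\<close> is the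
  parent of at least \<open>d\<close> such edges and the child of at most one, which yields
  \<open>(d c_p - 1) \<Sum>|\<delta>|^p\<close>. A broken edge can lower the energy by at most \<open>M^p\<close>, and at most
  \<open>d_max\<close> of them meet each vertex; this costs \<open>(c_p + 1) d_max M^p \<Sum>|\<delta>|^p\<close>. Finally
  \<open>c_p \<le> 1\<close>, and \<open>d_bound\<close> is chosen exactly so that the resulting constant is positive.\<close>

lemma c_p_pos: "c_p p > 0"
  by (simp add: c_p_def)

lemma c_p_le_1: "c_p p \<le> 1"
  by (simp add: c_p_def)

lemma c_p_eq_1: "p \<le> 1 \<Longrightarrow> c_p p = 1"
  unfolding c_p_def by (simp add: ge_one_powr_ge_zero)

lemma c_p_eq_powr: "p \<ge> 1 \<Longrightarrow> c_p p = 2 powr (1 - p)"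
  using powr_mono[of "1 - p" 0 2] unfolding c_p_def by simp

lemma powr_add_le_add_powr:
  fixes a b p :: real
  assumes "a > 0" "b > 0" "0 < p" "p \<le> 1"
  shows "(a + b) powr p \<le> a powr p + b powr p"
proof -
  have le_powr: "x \<le> x powr p" if "0 \<le> x" "x \<le> 1" for x :: real
    using powr_mono'[of p 1 x] that assms by simp
  have "1 = a / (a + b) + b / (a + b)"
    using assms by (simp add: add_divide_distrib[symmetric])
  also have "\<dots> \<le> (a / (a + b)) powr p + (b / (a + b)) powr p"
    using assms by (intro add_mono le_powr) auto
  also have "\<dots> = (a powr p + b powr p) / (a + b) powr p"
    using assms by (simp add: powr_divide add_divide_distrib)
  finally show ?thesis
    using assms by (simp add: le_divide_eq)
qed

lemma two_powr_mult_powr_add_le: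
  fixes a b p :: real
  assumes "a > 0" "b > 0" "p \<ge> 1"
  shows "2 powr (1 - p) * (a + b) powr p \<le> a powr p + b powr p"
proof -
  have "((1 - 1/2) *\<^sub>R a + (1/2) *\<^sub>R b) powr p \<le> (1 - 1/2) * a powr p + (1/2) * b powr p"
    by (rule convex_onD[OF powr_convex[OF \<open>p \<ge> 1\<close>]]) (use assms in auto)
  then have "(a + b) powr p / 2 powr p \<le> (a powr p + b powr p) / 2"
    using assms by (simp add: field_simps powr_divide)
  then have "(a + b) powr p * 2 \<le> (a powr p + b powr p) * 2 powr p"
    by (simp add: field_simps)
  moreover have "2 powr (1 - p) * 2 powr p = 2"
    by (simp add: powr_add[symmetric])
  ultimately have "2 powr (1 - p) * (a + b) powr p * 2 powr p \<le> (a powr p + b powr p) * 2 powr p"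
    by (simp add: mult.commute mult.left_commute)
  then show ?thesis
    by simp
qed

lemma c_p_mult_powr_add_le:
  fixes a b p :: real
  assumes "a \<ge> 0" "b \<ge> 0" "p > 0"
  shows "c_p p * (a + b) powr p \<le> a powr p + b powr p"
proof (cases "a = 0 \<or> b = 0")
  case True
  then show ?thesis
    using c_p_le_1[of p] c_p_pos[of p] assms by (auto intro!: mult_left_le_one_le)
next
  case False
  with assms have "a > 0" "b > 0"
    by auto
  show ?thesis
  proof (cases "p \<le> 1")
    case True
    with powr_add_le_add_powr[OF \<open>a > 0\<close> \<open>b > 0\<close> \<open>p > 0\<close>] show ?thesis
      by (simp add: c_p_eq_1)
  next
    case False
    with two_powr_mult_powr_add_le[OF \<open>a > 0\<close> \<open>b > 0\<close>] show ?thesis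
      by (simp add: c_p_eq_powr)
  qed
qed

text \<open>A broken edge
  forces \<open>M \<ge> 1\<close>, so its correction term also absorbs the parent's share \<open>c_p |x - x0|^p\<close>.\<close>

lemma edge_energy_diff_ge:
  fixes x y x0 y0 :: int and p :: real
  assumes "p > 0" and "\<bar>x0 - y0\<bar> \<le> int M"
  shows "c_p p * real_of_int \<bar>x - x0\<bar> powr p - real_of_int \<bar>y - y0\<bar> powr p
           - (if x0 \<noteq> y0 then real M powr p * (1 + c_p p * real_of_int \<bar>x - x0\<bar> powr p) else 0)
         \<le> real_of_int \<bar>x - y\<bar> powr p - real_of_int \<bar>x0 - y0\<bar> powr p"
proof (cases "x0 = y0")
  case True
  have "c_p p * real_of_int \<bar>x - x0\<bar> powr p
      \<le> c_p p * (real_of_int \<bar>x - y\<bar> + real_of_int \<bar>y - y0\<bar>) powr p"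
    using True c_p_pos[of p] assms by (intro mult_left_mono powr_mono2) auto
  also have "\<dots> \<le> real_of_int \<bar>x - y\<bar> powr p + real_of_int \<bar>y - y0\<bar> powr p"
    by (rule c_p_mult_powr_add_le) (use assms in auto)
  finally show ?thesis
    using True by simp
next
  case False
  then have "1 \<le> real M"
    using assms(2) by linarith
  then have "1 \<le> real M powr p"
    using assms(1) by (intro ge_one_powr_ge_zero) auto
  moreover have "0 \<le> c_p p * real_of_int \<bar>x - x0\<bar> powr p"
    using c_p_pos[of p] by simp
  ultimately have "c_p p * real_of_int \<bar>x - x0\<bar> powr p
      \<le> real M powr p * (c_p p * real_of_int \<bar>x - x0\<bar> powr p)"
    using mult_right_mono by fastforce
  moreover have "real_of_int \<bar>x0 - y0\<bar> powr p \<le> real M powr p"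
    using assms by (intro powr_mono2) auto
  moreover have "0 \<le> real_of_int \<bar>x - y\<bar> powr p" "0 \<le> real_of_int \<bar>y - y0\<bar> powr p"
    by simp_all
  moreover have "real M powr p * (1 + c_p p * real_of_int \<bar>x - x0\<bar> powr p)
      = real M powr p + real M powr p * (c_p p * real_of_int \<bar>x - x0\<bar> powr p)"
    by (simp add: distrib_left)
  ultimately show ?thesis
    unfolding if_P[OF False] by linarith
qed

lemma tree_EE:
  assumes "e \<in> tree_E d"
  obtains a where "snd e = fst e @ [a]" "fst e @ [a] \<in> tree_V d"
  using assms by (auto simp: tree_E_def)

lemma tree_V_snocD: "v @ [a] \<in> tree_V d \<Longrightarrow> v \<in> tree_V d"
  unfolding tree_V_def
proof safe
  fix i
  assume "\<forall>i. Suc i < length (v @ [a]) \<longrightarrow> (v @ [a]) ! i \<noteq> (v @ [a]) ! Suc i"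
    and "Suc i < length v" and "v ! i = v ! Suc i"
  then show False
    by (auto simp: nth_append dest: spec[of _ i])
qed auto

lemma snoc_in_tree_V:
  assumes "u \<in> tree_V d" "a \<le> d" "u = [] \<or> a \<noteq> last u"
  shows "u @ [a] \<in> tree_V d"
  unfolding tree_V_def
proof safe
  fix x
  assume "x \<in> set (u @ [a])"
  then show "x \<le> d"
    using assms by (auto simp: tree_V_def)
next
  fix i
  assume i: "Suc i < length (u @ [a])" and eq: "(u @ [a]) ! i = (u @ [a]) ! Suc i"
  show False
  proof (cases "Suc i < length u")
    case True
    then show False
      using assms(1) eq by (auto simp: tree_V_def nth_append)
  next
    case False
    with i have "Suc i = length u"
      by simp
    then have "u \<noteq> []" and "i = length u - 1"
      by auto
    then have "u ! i = last u"
      by (simp add: last_conv_nth)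
    with eq \<open>Suc i = length u\<close> \<open>u \<noteq> []\<close> assms(3) show False
      by (simp add: nth_append)
  qed
qed

lemma tree_E_endpoints:
  assumes "e \<in> tree_E d"
  shows "fst e \<in> tree_V d" "snd e \<in> tree_V d"
  using assms by (auto elim!: tree_EE dest: tree_V_snocD)

lemma inj_on_snd_tree_E: "inj_on snd (tree_E d)"
proof (rule inj_onI)
  fix e e'
  assume "e \<in> tree_E d" "e' \<in> tree_E d" and snd_eq: "snd e = snd e'"
  then have "fst e = butlast (snd e)" "fst e' = butlast (snd e')"
    by (auto elim!: tree_EE)
  with snd_eq show "e = e'"
    by (simp add: prod_eq_iff)
qed

lemma finite_tree_E_incident: "finite {e \<in> tree_E d. incident v e}"
proof (rule finite_subset)
  show "{e \<in> tree_E d. incident v e} \<subseteq> (\<lambda>a. (v, v @ [a])) ` {..d} \<union> {(butlast v, v)}"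
  proof
    fix e
    assume "e \<in> {e \<in> tree_E d. incident v e}"
    then have "e \<in> tree_E d" and "fst e = v \<or> snd e = v"
      by (auto simp: incident_def)
    then obtain a where "snd e = fst e @ [a]" "a \<le> d"
      by (auto elim!: tree_EE simp: tree_V_def)
    with \<open>fst e = v \<or> snd e = v\<close> show "e \<in> (\<lambda>a. (v, v @ [a])) ` {..d} \<union> {(butlast v, v)}"
      by (cases e) auto
  qed
qed simp

lemma finite_incident_subset: "D \<subseteq> tree_E d \<Longrightarrow> finite {e \<in> D. incident v e}"
  by (rule finite_subset[OF _ finite_tree_E_incident[of d v]]) auto

lemma finite_tree_E_children: "finite {e \<in> tree_E d. fst e = u}"
  by (rule finite_subset[OF _ finite_tree_E_incident[of d u]]) (auto simp: incident_def)

lemma card_tree_E_children_ge: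
  assumes "u \<in> tree_V d"
  shows "d \<le> card {e \<in> tree_E d. fst e = u}"
proof -
  have "d \<le> card ({..d} - {last u})"
    by (simp add: card_Diff_singleton_if)
  also have "\<dots> = card ((\<lambda>a. (u, u @ [a])) ` ({..d} - {last u}))"
    by (rule card_image[symmetric]) (auto simp: inj_on_def)
  also have "\<dots> \<le> card {e \<in> tree_E d. fst e = u}"
  proof (rule card_mono)
    show "finite {e \<in> tree_E d. fst e = u}"
      by (rule finite_tree_E_children)
    show "(\<lambda>a. (u, u @ [a])) ` ({..d} - {last u}) \<subseteq> {e \<in> tree_E d. fst e = u}"
      using snoc_in_tree_V[OF assms] by (auto simp: tree_E_def)
  qed
  finally show ?thesis .
qed

definition incident_edges :: "nat \<Rightarrow> nat list set \<Rightarrow> (nat list \<times> nat list) set" where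
  "incident_edges d S = {e \<in> tree_E d. \<exists>v\<in>S. incident v e}"

lemma finite_incident_edges: "finite S \<Longrightarrow> finite (incident_edges d S)"
proof -
  assume "finite S"
  moreover have "incident_edges d S = (\<Union>v\<in>S. {e \<in> tree_E d. incident v e})"
    by (auto simp: incident_edges_def)
  ultimately show ?thesis
    using finite_tree_E_incident by simp
qed

lemma sum_fst_incident_edges_ge:
  fixes A :: "nat list \<Rightarrow> real"
  assumes "finite S" "S \<subseteq> tree_V d" "\<And>v. 0 \<le> A v"
  shows "real d * sum A S \<le> (\<Sum>e\<in>incident_edges d S. A (fst e))"
proof -
  let ?C = "\<lambda>u. {e \<in> tree_E d. fst e = u}"
  have "real d * sum A S = (\<Sum>u\<in>S. real d * A u)"
    by (simp add: sum_distrib_left)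
  also have "\<dots> \<le> (\<Sum>u\<in>S. \<Sum>e\<in>?C u. A (fst e))"
  proof (rule sum_mono)
    fix u
    assume "u \<in> S"
    then have "real d \<le> real (card (?C u))"
      using card_tree_E_children_ge assms(2) by auto
    then show "real d * A u \<le> (\<Sum>e\<in>?C u. A (fst e))"
      using assms(3)[of u] by (simp add: mult_right_mono)
  qed
  also have "\<dots> = (\<Sum>e\<in>(\<Union>u\<in>S. ?C u). A (fst e))"
    by (rule sum.UNION_disjoint[symmetric]) (use assms(1) finite_tree_E_children in auto)
  also have "\<dots> \<le> (\<Sum>e\<in>incident_edges d S. A (fst e))"
    by (rule sum_mono2) (use assms finite_incident_edges in \<open>auto simp: incident_edges_def incident_def\<close>)
  finally show ?thesis .
qed

lemma sum_snd_tree_E_le: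
  fixes A :: "nat list \<Rightarrow> real"
  assumes "finite S" "finite F" "F \<subseteq> tree_E d" "\<And>v. 0 \<le> A v"
    and "\<And>v. v \<in> tree_V d \<Longrightarrow> v \<notin> S \<Longrightarrow> A v = 0"
  shows "(\<Sum>e\<in>F. A (snd e)) \<le> sum A S"
proof -
  have "(\<Sum>e\<in>F. A (snd e)) = sum A (snd ` F)"
    using inj_on_subset[OF inj_on_snd_tree_E assms(3)] by (simp add: sum.reindex)
  also have "\<dots> = sum A (snd ` F \<inter> S)"
  proof (rule sum.mono_neutral_right)
    have "snd ` F \<subseteq> tree_V d"
      using assms(3) tree_E_endpoints(2) by blast
    then show "\<forall>v\<in>snd ` F - snd ` F \<inter> S. A v = 0"
      using assms(5) by blast
  qed (use assms(2) in auto)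
  also have "\<dots> \<le> sum A S"
    by (rule sum_mono2) (use assms in auto)
  finally show ?thesis .
qed

lemma card_incident_edges_inter_le:
  assumes "finite S" "D \<subseteq> tree_E d" "\<And>v. v \<in> S \<Longrightarrow> degree_in D v \<le> k"
  shows "card (incident_edges d S \<inter> D) \<le> k * card S"
proof -
  have "card (incident_edges d S \<inter> D) \<le> card (\<Union>v\<in>S. {e \<in> D. incident v e})"
    by (rule card_mono) (use assms finite_incident_subset in \<open>auto simp: incident_edges_def\<close>)
  also have "\<dots> \<le> (\<Sum>v\<in>S. degree_in D v)"
    unfolding degree_in_def by (rule card_UN_le[OF assms(1)])
  also have "\<dots> \<le> k * card S"
    using sum_bounded_above[of S "degree_in D" k] assms(3) by (simp add: mult.commute)
  finally show ?thesis .
qed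

lemma sum_fst_incident_edges_inter_le:
  fixes A :: "nat list \<Rightarrow> real"
  assumes "finite S" "D \<subseteq> tree_E d" "\<And>v. v \<in> S \<Longrightarrow> degree_in D v \<le> k"
    and "\<And>v. 0 \<le> A v" "\<And>v. v \<in> tree_V d \<Longrightarrow> v \<notin> S \<Longrightarrow> A v = 0"
  shows "(\<Sum>e\<in>incident_edges d S \<inter> D. A (fst e)) \<le> real k * sum A S"
proof -
  let ?C = "\<lambda>u. {e \<in> D. fst e = u}"
  have finite_C: "finite (?C u)" for u
    by (rule finite_subset[OF _ finite_tree_E_children[of d u]]) (use assms(2) in auto)
  have "(\<Sum>e\<in>incident_edges d S \<inter> D. A (fst e)) = (\<Sum>e\<in>(\<Union>u\<in>S. ?C u). A (fst e))"
    by (rule sum.mono_neutral_right)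
      (use assms finite_incident_edges tree_E_endpoints in \<open>auto simp: incident_edges_def incident_def\<close>)
  also have "\<dots> = (\<Sum>u\<in>S. \<Sum>e\<in>?C u. A (fst e))"
    by (rule sum.UNION_disjoint) (use assms(1) finite_C in auto)
  also have "\<dots> \<le> (\<Sum>u\<in>S. real k * A u)"
  proof (rule sum_mono)
    fix u
    assume "u \<in> S"
    have "card (?C u) \<le> degree_in D u"
      unfolding degree_in_def
      by (rule card_mono) (use finite_incident_subset assms(2) in \<open>auto simp: incident_def\<close>)
    with assms(3)[OF \<open>u \<in> S\<close>] have "real (card (?C u)) \<le> real k"
      by simp
    then show "(\<Sum>e\<in>?C u. A (fst e)) \<le> real k * A u"
      using assms(4)[of u] by (simp add: mult_right_mono)
  qed
  finally show ?thesis
    by (simp add: sum_distrib_left)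
qed

lemma H_diff_eq_sum_incident_edges:
  "H_diff p d \<omega> \<omega>0 = (\<Sum>e\<in>incident_edges d (diff_sites d \<omega> \<omega>0).
      real_of_int \<bar>\<omega> (fst e) - \<omega> (snd e)\<bar> powr p - real_of_int \<bar>\<omega>0 (fst e) - \<omega>0 (snd e)\<bar> powr p)"
  by (simp add: H_diff_def incident_edges_def)

definition deviation :: "real \<Rightarrow> (nat list \<Rightarrow> int) \<Rightarrow> (nat list \<Rightarrow> int) \<Rightarrow> nat list \<Rightarrow> real" where
  "deviation p \<omega> \<omega>0 v = real_of_int \<bar>\<omega> v - \<omega>0 v\<bar> powr p"

lemma deviation_nonneg: "0 \<le> deviation p \<omega> \<omega>0 v"
  by (simp add: deviation_def)

lemma deviation_outside_diff_sites:
  "v \<in> tree_V d \<Longrightarrow> v \<notin> diff_sites d \<omega> \<omega>0 \<Longrightarrow> deviation p \<omega> \<omega>0 v = 0"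
  by (simp add: deviation_def diff_sites_def)

lemma card_diff_sites_le_sum_deviation:
  assumes "p \<ge> 0"
  shows "real (card (diff_sites d \<omega> \<omega>0)) \<le> (\<Sum>v\<in>diff_sites d \<omega> \<omega>0. deviation p \<omega> \<omega>0 v)"
proof -
  have "1 \<le> deviation p \<omega> \<omega>0 v" if "v \<in> diff_sites d \<omega> \<omega>0" for v
  proof -
    from that have "1 \<le> real_of_int \<bar>\<omega> v - \<omega>0 v\<bar>"
      by (auto simp: diff_sites_def)
    with assms show ?thesis
      unfolding deviation_def by (rule ge_one_powr_ge_zero[rotated])
  qed
  then show ?thesis
    using sum_mono[of "diff_sites d \<omega> \<omega>0" "\<lambda>_. 1" "deviation p \<omega> \<omega>0"] by simp
qed

lemma H_diff_ge_edge_sums: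
  fixes p :: real and M d :: nat and \<omega>0 \<omega> :: "nat list \<Rightarrow> int"
  defines "F \<equiv> incident_edges d (diff_sites d \<omega> \<omega>0)" and "B \<equiv> broken_edges d \<omega>0"
    and "A \<equiv> deviation p \<omega> \<omega>0"
  assumes "p > 0" and incr: "\<forall>e\<in>tree_E d. \<bar>\<omega>0 (fst e) - \<omega>0 (snd e)\<bar> \<le> int M"
    and "finite (diff_sites d \<omega> \<omega>0)"
  shows "c_p p * (\<Sum>e\<in>F. A (fst e)) - (\<Sum>e\<in>F. A (snd e))
           - real M powr p * (card (F \<inter> B) + c_p p * (\<Sum>e\<in>F \<inter> B. A (fst e)))
         \<le> H_diff p d \<omega> \<omega>0"
proof -
  define cp where "cp = c_p p"
  define Mp where "Mp = real M powr p"
  have "F \<subseteq> tree_E d" "finite F"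
    using assms(6) finite_incident_edges by (auto simp: F_def incident_edges_def)
  have "(\<Sum>e\<in>F. cp * A (fst e) - A (snd e) - (if e \<in> B then Mp * (1 + cp * A (fst e)) else 0))
      \<le> H_diff p d \<omega> \<omega>0"
    unfolding H_diff_eq_sum_incident_edges F_def[symmetric]
  proof (rule sum_mono)
    fix e
    assume "e \<in> F"
    with \<open>F \<subseteq> tree_E d\<close> have "e \<in> tree_E d"
      by blast
    then have broken_iff: "e \<in> B \<longleftrightarrow> \<omega>0 (fst e) \<noteq> \<omega>0 (snd e)"
      by (simp add: B_def broken_edges_def)
    show "cp * A (fst e) - A (snd e) - (if e \<in> B then Mp * (1 + cp * A (fst e)) else 0)
        \<le> real_of_int \<bar>\<omega> (fst e) - \<omega> (snd e)\<bar> powr p - real_of_int \<bar>\<omega>0 (fst e) - \<omega>0 (snd e)\<bar> powr p"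
      unfolding broken_iff cp_def A_def Mp_def deviation_def
      by (rule edge_energy_diff_ge[OF assms(4) incr[rule_format, OF \<open>e \<in> tree_E d\<close>]])
  qed
  moreover have "(\<Sum>e\<in>F \<inter> B. Mp * (1 + cp * A (fst e)))
      = Mp * (card (F \<inter> B) + cp * (\<Sum>e\<in>F \<inter> B. A (fst e)))"
    by (simp add: distrib_left sum.distrib sum_distrib_left mult_ac)
  ultimately show ?thesis
    using \<open>finite F\<close>
    by (simp add: cp_def Mp_def sum_subtractf sum_distrib_left sum.inter_restrict[symmetric])
qed

lemma H_diff_ge:
  fixes p :: real and M dmax d :: nat and \<omega>0 \<omega> :: "nat list \<Rightarrow> int"
  assumes "p > 0"
    and deg: "\<forall>v\<in>tree_V d. degree_in (broken_edges d \<omega>0) v \<le> dmax"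
    and incr: "\<forall>e\<in>tree_E d. \<bar>\<omega>0 (fst e) - \<omega>0 (snd e)\<bar> \<le> int M"
    and "finite (diff_sites d \<omega> \<omega>0)"
  shows "(real d * (c_p p)^2 - 1 - (c_p p + 1) * real dmax * (real M powr p))
           * (\<Sum>v\<in>diff_sites d \<omega> \<omega>0. real_of_int \<bar>\<omega> v - \<omega>0 v\<bar> powr p) \<le> H_diff p d \<omega> \<omega>0"
proof -
  define S where "S = diff_sites d \<omega> \<omega>0"
  define A where "A = deviation p \<omega> \<omega>0"
  define F where "F = incident_edges d S"
  define B where "B = broken_edges d \<omega>0"
  define cp where "cp = c_p p"
  define Mp where "Mp = real M powr p"
  define \<sigma> where "\<sigma> = sum A S"
  have "finite S" "S \<subseteq> tree_V d" "F \<subseteq> tree_E d" "B \<subseteq> tree_E d"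
    using assms(4) by (auto simp: S_def F_def B_def diff_sites_def incident_edges_def broken_edges_def)
  then have "finite F"
    by (simp add: F_def finite_incident_edges)
  note A_nonneg = deviation_nonneg[of p \<omega> \<omega>0, folded A_def]
  note A_outside = deviation_outside_diff_sites[of _ d \<omega> \<omega>0 p, folded A_def S_def]
  have "cp > 0" "cp \<le> 1" "0 \<le> Mp" "0 \<le> \<sigma>"
    using c_p_pos c_p_le_1 A_nonneg by (simp_all add: cp_def Mp_def \<sigma>_def sum_nonneg)
  have deg_S: "degree_in B v \<le> dmax" if "v \<in> S" for v
    using deg that \<open>S \<subseteq> tree_V d\<close> by (auto simp: B_def)

  have "real d * \<sigma> \<le> (\<Sum>e\<in>F. A (fst e))"
    unfolding \<sigma>_def F_def
    using sum_fst_incident_edges_ge \<open>finite S\<close> \<open>S \<subseteq> tree_V d\<close> A_nonneg by blast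
  then have parents: "cp * (real d * \<sigma>) \<le> cp * (\<Sum>e\<in>F. A (fst e))"
    using \<open>cp > 0\<close> by simp
  have children: "(\<Sum>e\<in>F. A (snd e)) \<le> \<sigma>"
    unfolding \<sigma>_def
    using sum_snd_tree_E_le \<open>finite S\<close> \<open>finite F\<close> \<open>F \<subseteq> tree_E d\<close> A_nonneg A_outside by blast
  have "real (card (F \<inter> B)) \<le> real dmax * real (card S)"
    unfolding F_def using card_incident_edges_inter_le \<open>finite S\<close> \<open>B \<subseteq> tree_E d\<close> deg_S
    by (metis of_nat_le_iff of_nat_mult)
  also have "\<dots> \<le> real dmax * \<sigma>"
    using card_diff_sites_le_sum_deviation assms(1)
    by (intro mult_left_mono) (auto simp: \<sigma>_def S_def A_def)
  finally have "card (F \<inter> B) \<le> real dmax * \<sigma>" .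
  moreover have "(\<Sum>e\<in>F \<inter> B. A (fst e)) \<le> real dmax * \<sigma>"
    unfolding F_def \<sigma>_def
    using sum_fst_incident_edges_inter_le \<open>finite S\<close> \<open>B \<subseteq> tree_E d\<close> deg_S A_nonneg A_outside
    by blast
  ultimately have "card (F \<inter> B) + cp * (\<Sum>e\<in>F \<inter> B. A (fst e)) \<le> (1 + cp) * (real dmax * \<sigma>)"
    using \<open>cp > 0\<close> by (simp add: distrib_right mult_left_mono add_mono)
  then have broken: "Mp * (card (F \<inter> B) + cp * (\<Sum>e\<in>F \<inter> B. A (fst e)))
      \<le> Mp * ((1 + cp) * (real dmax * \<sigma>))"
    using \<open>0 \<le> Mp\<close> by (rule mult_left_mono)
  have "cp^2 \<le> cp"
    using \<open>cp > 0\<close> \<open>cp \<le> 1\<close> by (simp add: power2_eq_square mult_left_le_one_le)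
  then have "real d * cp^2 * \<sigma> \<le> cp * (real d * \<sigma>)"
    using \<open>0 \<le> \<sigma>\<close> mult_right_mono[of "cp^2" cp "real d * \<sigma>"] by (simp add: ac_simps)
  with H_diff_ge_edge_sums[OF assms(1) incr assms(4), folded S_def A_def F_def B_def cp_def Mp_def]
    parents children broken
  have "(real d * cp^2 - 1 - (cp + 1) * real dmax * Mp) * \<sigma> \<le> H_diff p d \<omega> \<omega>0"
    by (simp add: algebra_simps)
  then show ?thesis
    by (simp add: cp_def Mp_def \<sigma>_def S_def A_def deviation_def)
qed

text \<open>\<open>d_bound\<close> is one more than the floor of the root \<open>X\<close> of the linear function
  \<open>d \<mapsto> d c_p\<^sup>2 - 1 - (c_p + 1) d_max M\<^sup>p\<close>, so every admissible \<open>d\<close> exceeds \<open>X\<close>.\<close>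

lemma stability_constant_pos:
  assumes "d \<ge> d_bound p M dmax"
  shows "real d * (c_p p)^2 - 1 - (c_p p + 1) * real dmax * (real M powr p) > 0"
proof -
  define cp where "cp = c_p p"
  define K where "K = real dmax * real M powr p"
  define X where "X = inverse (cp^2) + (inverse cp + inverse (cp^2)) * K"
  have "cp > 0" "K \<ge> 0"
    by (simp_all add: cp_def K_def c_p_pos)
  then have "X \<ge> 0"
    by (simp add: X_def)
  have "d_bound p M dmax = 1 + nat \<lfloor>X\<rfloor>"
    by (simp add: d_bound_def X_def cp_def K_def power_int_minus mult.assoc)
  with assms \<open>X \<ge> 0\<close> have "real d > X"
    by linarith
  with \<open>cp > 0\<close> have "real d * cp^2 > X * cp^2"
    by simp
  also have "X * cp^2 = 1 + (cp + 1) * K"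
    using \<open>cp > 0\<close> by (simp add: X_def field_simps power2_eq_square)
  finally show ?thesis
    by (simp add: cp_def K_def mult.assoc)
qed

theorem mainTheorem4:
  fixes p :: real and M dmax d :: nat and \<omega>0 :: "nat list \<Rightarrow> int"
  assumes "p > 0"
    and "d \<ge> d_bound p M dmax"
    and "\<forall>v\<in>tree_V d. degree_in (broken_edges d \<omega>0) v \<le> dmax"
    and "\<forall>e\<in>tree_E d. \<bar>\<omega>0 (fst e) - \<omega>0 (snd e)\<bar> \<le> int M"
  shows "stable p d \<omega>0 (real d * (c_p p)^2 - 1 - (c_p p + 1) * real dmax * (real M powr p))"
  unfolding stable_def
  using stability_constant_pos[OF assms(2)] H_diff_ge[OF assms(1,3,4)] by blast

end
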